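(* Let $n\geqslant 3$, $X\geqslant 1$ and $\mathbf{y}\in\mathbb{N}^n$ with $1\leqslant y_i\leqslant X$ for all $i$. Then $$N_{\mathbf{y}}(X)\ll\frac{X^{n-1}}{\|\mathbf{d}\|_2},$$ where $\|\cdot\|_2$ is the Euclidean norm on $\mathbb{R}^n$ and $\mathbf{d}=(d_1,\dots,d_n)$.
   Context: $N_{\mathbf{y}}(X)=\#\{\mathbf{x}\in\mathbb{Z}^n:\ \max_i|x_i|\leqslant X,\ \sum_{i=1}^n x_i\prod_{j\neq i}y_j=0\}$. Let $N=2^n-1$; for $h\in\{1,\dots,N\}$ write $h=\sum_{j}\varepsilon_j(h)2^{j-1}$ with $\varepsilon_j(h)\in\{0,1\}$; $h\preceq\ell$ means $\varepsilon_j(h)\leqslant\varepsilon_j(\ell)$ for all $j$. Let $(z_h)$ be the unique reduced $N$-tuple of positive integers ($\gcd(z_h,z_\ell)=1$ whenever $h,\ell$ are $\preceq$-incomparable) with $y_j=\prod_h z_h^{\varepsilon_j(h)}$, and $d_i=\prod_h z_h^{1-\varepsilon_i(h)}$. *)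

theory Defs
  imports Complex_Main
begin

text \<open>Indices are 0-based: coordinates i, j range over 0..n-1 (paper: 1..n),
  and eps j h is the binary digit of h at position j (paper: epsilon_{j+1}(h)).\<close>

definition eps :: "nat \<Rightarrow> nat \<Rightarrow> nat" where
  "eps j h = (h div 2 ^ j) mod 2"

definition preceq :: "nat \<Rightarrow> nat \<Rightarrow> nat \<Rightarrow> bool" where
  "preceq n h l \<longleftrightarrow> (\<forall>j<n. eps j h \<le> eps j l)"

definition Ncount :: "nat \<Rightarrow> (nat \<Rightarrow> nat) \<Rightarrow> real \<Rightarrow> nat" where
  "Ncount n y X = card {x :: nat \<Rightarrow> int.
      (\<forall>i\<ge>n. x i = 0) \<and> (\<forall>i<n. real_of_int \<bar>x i\<bar> \<le> X) \<and>
      (\<Sum>i<n. x i * (\<Prod>j\<in>{..<n} - {i}. int (y j))) = 0}"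

text \<open>Reduced N-tuple (z_h)_{h=1..N}, N = 2^n - 1, of positive integers
  (values outside 1..N are fixed to 0 to make it unique as a function).\<close>
definition is_reduced_tuple :: "nat \<Rightarrow> (nat \<Rightarrow> nat) \<Rightarrow> (nat \<Rightarrow> nat) \<Rightarrow> bool" where
  "is_reduced_tuple n y z \<longleftrightarrow>
     (\<forall>h\<in>{1..2^n - 1}. z h > 0) \<and> (\<forall>h. h \<notin> {1..2^n - 1} \<longrightarrow> z h = 0) \<and>
     (\<forall>h\<in>{1..2^n - 1}. \<forall>l\<in>{1..2^n - 1}.
        \<not> preceq n h l \<and> \<not> preceq n l h \<longrightarrow> coprime (z h) (z l)) \<and>
     (\<forall>j<n. y j = (\<Prod>h\<in>{1..2^n - 1}. z h ^ eps j h))"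

definition ztuple :: "nat \<Rightarrow> (nat \<Rightarrow> nat) \<Rightarrow> nat \<Rightarrow> nat" where
  "ztuple n y = (THE z. is_reduced_tuple n y z)"

definition dvec :: "nat \<Rightarrow> (nat \<Rightarrow> nat) \<Rightarrow> nat \<Rightarrow> nat" where
  "dvec n y i = (\<Prod>h\<in>{1..2^n - 1}. ztuple n y h ^ (1 - eps i h))"

definition dnorm :: "nat \<Rightarrow> (nat \<Rightarrow> nat) \<Rightarrow> real" where
  "dnorm n y = sqrt (\<Sum>i<n. (real (dvec n y i))\<^sup>2)"

end

theory Submission
  imports Defs "HOL-Computational_Algebra.Primes" "HOL-Library.Nat_Bijection" "HOL-Library.FuncSet"
begin

text \<open>Index h \<in> {1..2^n-1} by the nonempty set of its binary digits. For each prime p the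
  exponents v_p(z_h) of a reduced tuple are supported on a chain of such sets, and a chain-supported
  family is determined by its sums v_p(y_j) over the sets containing j: the sum over all supersets of T
  is the minimum over j \<in> T. Conversely the superlevel sets {j. t \<le> v_p(y_j)} form a chain, which
  constructs the tuple. The same chain property shows that no prime divides every d_i, so the d_i
  satisfy a Bezout relation.

  Since d_i y_i = \<Prod>_h z_h for all i, the equation of N_y(X) is equivalent to d \<cdot> x = 0. Shifting a
  solution by a vector with entries in [0, y_i) whose d-weighted sum is congruent to c modulo d_k, for
  c \<in> [0, d_k), embeds d_k copies of the solution set into a box of (3X+1)^(n-1) points. Choosing d_k
  maximal gives \<parallel>d\<parallel>_2 \<le> \<surd>n d_k.\<close>

section \<open>Binary digits as subsets\<close>

lemma eps_eq_of_bool: "eps j h = of_bool (j \<in> set_decode h)"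
  by (simp add: eps_def set_decode_def odd_iff_mod_2_eq_one)

lemma set_decode_subset_lessThan: "h < 2 ^ n \<Longrightarrow> set_decode h \<subseteq> {..<n}"
proof
  fix j assume "h < 2 ^ n" "j \<in> set_decode h"
  then have "h div 2 ^ j \<noteq> 0" by (metis even_zero mem_Collect_eq set_decode_def)
  then have "2 ^ j \<le> h" by (simp add: div_eq_0_iff)
  then show "j \<in> {..<n}" using \<open>h < 2 ^ n\<close> by (auto dest: le_less_trans simp: power_strict_increasing_iff)
qed

lemma inj_set_decode: "inj set_decode"
  by (metis injI set_decode_inverse)

lemma set_decode_eq_empty_iff [simp]: "set_decode h = {} \<longleftrightarrow> h = 0"
  by (metis set_decode_inverse set_decode_zero set_encode_empty)

lemma set_encode_lessThan_power: "B \<subseteq> {..<n} \<Longrightarrow> set_encode B < 2 ^ n"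
proof -
  assume "B \<subseteq> {..<n}"
  then have "set_encode B \<le> (\<Sum>i<n. 2 ^ i)"
    unfolding set_encode_def by (intro sum_mono2) auto
  also have "\<dots> < 2 ^ n" by (induction n) auto
  finally show ?thesis .
qed

lemma bij_betw_set_decode:
  "bij_betw set_decode {1..2 ^ n - 1} {B. B \<subseteq> {..<n} \<and> B \<noteq> {}}"
proof (rule bij_betw_imageI)
  show "inj_on set_decode {1..2 ^ n - 1}" using inj_set_decode by (rule inj_on_subset) simp
  show "set_decode ` {1..2 ^ n - 1} = {B. B \<subseteq> {..<n} \<and> B \<noteq> {}}"
  proof (intro equalityI subsetI)
    fix B assume "B \<in> set_decode ` {1..2 ^ n - 1}"
    then obtain h where "1 \<le> h" "h \<le> 2 ^ n - 1" "B = set_decode h" by auto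
    moreover have "(0::nat) < 2 ^ n" by simp
    ultimately have "1 \<le> h" "h < 2 ^ n" "B = set_decode h" by linarith+
    then show "B \<in> {B. B \<subseteq> {..<n} \<and> B \<noteq> {}}"
      using set_decode_subset_lessThan by auto
  next
    fix B assume B: "B \<in> {B. B \<subseteq> {..<n} \<and> B \<noteq> {}}"
    then have fin: "finite B" by (auto intro: finite_subset)
    then have dec: "set_decode (set_encode B) = B" by simp
    then have "set_encode B \<noteq> 0" using B by auto
    moreover have "set_encode B < 2 ^ n" using B by (simp add: set_encode_lessThan_power)
    ultimately have "set_encode B \<in> {1..2 ^ n - 1}" by simp
    then show "B \<in> set_decode ` {1..2 ^ n - 1}" using dec by (metis image_eqI)
  qed
qed

lemma set_decode_range:
  "h \<in> {1..2 ^ n - 1} \<Longrightarrow> set_decode h \<subseteq> {..<n} \<and> set_decode h \<noteq> {}"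
  using bij_betw_apply[OF bij_betw_set_decode] by blast

lemma preceq_iff_subset:
  "set_decode h \<subseteq> {..<n} \<Longrightarrow> preceq n h l \<longleftrightarrow> set_decode h \<subseteq> set_decode l"
  by (auto simp: preceq_def eps_eq_of_bool)

section \<open>Weights supported on a chain of sets\<close>

definition chain_supported :: "'i set \<Rightarrow> ('i \<Rightarrow> 'a set) \<Rightarrow> ('i \<Rightarrow> nat) \<Rightarrow> bool" where
  "chain_supported I B e \<longleftrightarrow>
     (\<forall>h\<in>I. \<forall>l\<in>I. 0 < e h \<and> 0 < e l \<longrightarrow> B h \<subseteq> B l \<or> B l \<subseteq> B h)"

lemma chain_supported_common_element:
  assumes "finite I" "chain_supported I B e" "\<forall>h\<in>I. B h \<noteq> {}" "h\<^sub>0 \<in> I" "0 < e h\<^sub>0"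
  obtains j where "\<And>h. h \<in> I \<Longrightarrow> 0 < e h \<Longrightarrow> j \<in> B h"
proof -
  define S where "S = {h\<in>I. 0 < e h}"
  have "finite (B ` S)" "B ` S \<noteq> {}" using assms unfolding S_def by auto
  then obtain m where m: "m \<in> S" and min: "\<And>h. h \<in> S \<Longrightarrow> B h \<subseteq> B m \<Longrightarrow> B h = B m"
    using finite_has_minimal[of "B ` S"] by (metis (no_types, lifting) imageE image_eqI)
  obtain j where "j \<in> B m" using m assms(3) unfolding S_def by auto
  have "B m \<subseteq> B h" if "h \<in> S" for h
    using assms(2) m that min unfolding chain_supported_def S_def by blast
  then show thesis using that \<open>j \<in> B m\<close> unfolding S_def by blast
qed

text \<open>As the sum over the supersets of T is trivially at most the sum over the sets containing any
  j \<in> T, this says it is the minimum of the latter over j \<in> T.\<close>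

lemma chain_supported_sum_superset:
  assumes "finite I" "chain_supported I B e" "T \<noteq> {}"
  obtains j where "j \<in> T"
    "(\<Sum>h | h \<in> I \<and> j \<in> B h. e h) = (\<Sum>h | h \<in> I \<and> T \<subseteq> B h. e h)"
proof -
  define S where "S = {h\<in>I. 0 < e h \<and> \<not> T \<subseteq> B h}"
  obtain j where j: "j \<in> T" and avoid: "\<And>h. h \<in> S \<Longrightarrow> j \<notin> B h"
  proof (cases "S = {}")
    case False
    have "finite (B ` S)" "B ` S \<noteq> {}" using assms False unfolding S_def by auto
    then obtain m where m: "m \<in> S" and max: "\<And>h. h \<in> S \<Longrightarrow> B m \<subseteq> B h \<Longrightarrow> B h = B m"
      using finite_has_maximal[of "B ` S"] by (metis (no_types, lifting) imageE image_eqI)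
    obtain j where "j \<in> T" "j \<notin> B m" using m unfolding S_def by auto
    moreover have "B h \<subseteq> B m" if "h \<in> S" for h
      using assms(2) m that max unfolding chain_supported_def S_def by blast
    ultimately show thesis using that by blast
  qed (use assms(3) in blast)
  have "(\<Sum>h | h \<in> I \<and> T \<subseteq> B h. e h) = (\<Sum>h | h \<in> I \<and> j \<in> B h. e h)"
    using assms(1) j avoid unfolding S_def by (intro sum.mono_neutral_left) auto
  then show thesis using that j by simp
qed

lemma chain_supported_unique:
  assumes "finite I" "inj_on B I" "\<forall>h\<in>I. B h \<noteq> {}"
    and "chain_supported I B e" "chain_supported I B e'"
    and "\<And>j. (\<Sum>h | h \<in> I \<and> j \<in> B h. e h) = (\<Sum>h | h \<in> I \<and> j \<in> B h. e' h)"
    and "h \<in> I"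
  shows "e h = e' h"
proof -
  have superset_sum_eq: "(\<Sum>l | l \<in> I \<and> T \<subseteq> B l. e l) = (\<Sum>l | l \<in> I \<and> T \<subseteq> B l. e' l)"
    if T: "T \<noteq> {}" for T
  proof -
    obtain j where j: "j \<in> T" "(\<Sum>l | l \<in> I \<and> j \<in> B l. e l) = (\<Sum>l | l \<in> I \<and> T \<subseteq> B l. e l)"
      using chain_supported_sum_superset[OF assms(1,4) T] .
    obtain j' where j': "j' \<in> T" "(\<Sum>l | l \<in> I \<and> j' \<in> B l. e' l) = (\<Sum>l | l \<in> I \<and> T \<subseteq> B l. e' l)"
      using chain_supported_sum_superset[OF assms(1,5) T] .
    have "(\<Sum>l | l \<in> I \<and> T \<subseteq> B l. f l) \<le> (\<Sum>l | l \<in> I \<and> i \<in> B l. f l)" if "i \<in> T" for i and f :: "_ \<Rightarrow> nat"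
      using assms(1) that by (intro sum_mono2) auto
    from this[OF j(1), of e'] this[OF j'(1), of e] show ?thesis
      using j j' assms(6) by (metis le_antisym)
  qed
  show ?thesis
    using \<open>h \<in> I\<close>
  proof (induction "card {l\<in>I. B h \<subset> B l}" arbitrary: h rule: less_induct)
    case less
    have split: "{l\<in>I. B h \<subseteq> B l} = insert h {l\<in>I. B h \<subset> B l}"
      using less.prems assms(2) by (auto dest: inj_onD)
    have "e l = e' l" if "l \<in> {l\<in>I. B h \<subset> B l}" for l
    proof (rule less.hyps)
      show "card {l'\<in>I. B l \<subset> B l'} < card {l\<in>I. B h \<subset> B l}"
        using that assms(1) by (intro psubset_card_mono) auto
    qed (use that in auto)
    then have "(\<Sum>l | l \<in> I \<and> B h \<subset> B l. e l) = (\<Sum>l | l \<in> I \<and> B h \<subset> B l. e' l)"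
      by (intro sum.cong) auto
    moreover have "finite {l\<in>I. B h \<subset> B l}" using assms(1) by simp
    ultimately show ?case
      using superset_sum_eq[of "B h"] less.prems assms(3) split by simp
  qed
qed

definition superlevel_count :: "'a set \<Rightarrow> ('a \<Rightarrow> nat) \<Rightarrow> 'a set \<Rightarrow> nat" where
  "superlevel_count U f B = card {t. 0 < t \<and> {j\<in>U. t \<le> f j} = B}"

lemma superlevel_count_chain:
  assumes "0 < superlevel_count U f B" "0 < superlevel_count U f B'"
  shows "B \<subseteq> B' \<or> B' \<subseteq> B"
proof -
  obtain t t' where "{j\<in>U. t \<le> f j} = B" "{j\<in>U. t' \<le> f j} = B'"
    using assms unfolding superlevel_count_def card_gt_0_iff by blast
  then show ?thesis by (cases "t \<le> t'") auto
qed

lemma sum_superlevel_count: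
  assumes "finite U" "j \<in> U"
  shows "(\<Sum>B | B \<subseteq> U \<and> j \<in> B. superlevel_count U f B) = f j"
proof -
  define L where "L B = {t. 0 < t \<and> {i\<in>U. t \<le> f i} = B}" for B
  have "(\<Sum>B | B \<subseteq> U \<and> j \<in> B. superlevel_count U f B) = card (\<Union>B \<in> {B. B \<subseteq> U \<and> j \<in> B}. L B)"
    unfolding superlevel_count_def L_def[symmetric]
  proof (rule card_UN_disjoint[symmetric])
    show "finite {B. B \<subseteq> U \<and> j \<in> B}" using assms(1) by simp
    show "\<forall>B\<in>{B. B \<subseteq> U \<and> j \<in> B}. finite (L B)"
    proof
      fix B assume "B \<in> {B. B \<subseteq> U \<and> j \<in> B}"
      then have "L B \<subseteq> {..f j}" unfolding L_def by blast
      then show "finite (L B)" by (rule finite_subset) simp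
    qed
    show "\<forall>B\<in>{B. B \<subseteq> U \<and> j \<in> B}. \<forall>B'\<in>{B. B \<subseteq> U \<and> j \<in> B}. B \<noteq> B' \<longrightarrow> L B \<inter> L B' = {}"
      unfolding L_def by blast
  qed
  also have "(\<Union>B \<in> {B. B \<subseteq> U \<and> j \<in> B}. L B) = {1..f j}"
  proof (intro equalityI subsetI)
    fix t assume "t \<in> (\<Union>B \<in> {B. B \<subseteq> U \<and> j \<in> B}. L B)"
    then show "t \<in> {1..f j}" unfolding L_def by auto
  next
    fix t assume "t \<in> {1..f j}"
    then have "t \<in> L {i\<in>U. t \<le> f i}" "{i\<in>U. t \<le> f i} \<in> {B. B \<subseteq> U \<and> j \<in> B}"
      unfolding L_def using assms(2) by auto
    then show "t \<in> (\<Union>B \<in> {B. B \<subseteq> U \<and> j \<in> B}. L B)" by blast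
  qed
  finally show ?thesis by simp
qed

section \<open>Existence and uniqueness of the reduced tuple\<close>

lemma sum_set_decode_containing:
  "(\<Sum>h | h \<in> {1..2 ^ n - 1} \<and> j \<in> set_decode h. g (set_decode h)) = (\<Sum>B | B \<subseteq> {..<n} \<and> j \<in> B. g B)"
proof -
  have "bij_betw set_decode {h \<in> {1..2 ^ n - 1}. j \<in> set_decode h}
          {B \<in> {B. B \<subseteq> {..<n} \<and> B \<noteq> {}}. j \<in> B}"
    by (rule bij_betw_Collect[OF bij_betw_set_decode]) simp
  moreover have "{B \<in> {B. B \<subseteq> {..<n} \<and> B \<noteq> {}}. j \<in> B} = {B. B \<subseteq> {..<n} \<and> j \<in> B}"
    by auto
  ultimately show ?thesis by (simp add: sum.reindex_bij_betw)
qed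

lemma multiplicity_prod_power:
  fixes z :: "'i \<Rightarrow> 'a :: factorial_semiring"
  assumes "prime_elem p" "finite A" "\<forall>h\<in>A. z h \<noteq> 0"
  shows "multiplicity p (\<Prod>h\<in>A. z h ^ k h) = (\<Sum>h\<in>A. k h * multiplicity p (z h))"
proof -
  have "multiplicity p (\<Prod>h\<in>A. z h ^ k h) = (\<Sum>h\<in>A. multiplicity p (z h ^ k h))"
    using assms by (intro prime_elem_multiplicity_prod_distrib) auto
  also have "\<dots> = (\<Sum>h\<in>A. k h * multiplicity p (z h))"
    using assms by (intro sum.cong) (auto simp: prime_elem_multiplicity_power_distrib)
  finally show ?thesis .
qed

lemma multiplicity_reduced_tuple:
  assumes "is_reduced_tuple n y z" "prime p" "j < n"
  shows "multiplicity p (y j) = (\<Sum>h | h \<in> {1..2 ^ n - 1} \<and> j \<in> set_decode h. multiplicity p (z h))"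
proof -
  have "multiplicity p (y j) = multiplicity p (\<Prod>h\<in>{1..2 ^ n - 1}. z h ^ eps j h)"
    using assms unfolding is_reduced_tuple_def by simp
  also have "\<dots> = (\<Sum>h\<in>{1..2 ^ n - 1}. eps j h * multiplicity p (z h))"
    using assms unfolding is_reduced_tuple_def by (intro multiplicity_prod_power) auto
  also have "\<dots> = (\<Sum>h | h \<in> {1..2 ^ n - 1} \<and> j \<in> set_decode h. multiplicity p (z h))"
    by (simp add: eps_eq_of_bool Int_def)
  finally show ?thesis .
qed

lemma reduced_tuple_chain_supported:
  assumes "is_reduced_tuple n y z" "prime p"
  shows "chain_supported {1..2 ^ n - 1} set_decode (\<lambda>h. multiplicity p (z h))"
  unfolding chain_supported_def
proof (intro ballI impI)
  fix h l assume hl: "h \<in> {1..2 ^ n - 1}" "l \<in> {1..2 ^ n - 1}"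
    and pos: "0 < multiplicity p (z h) \<and> 0 < multiplicity p (z l)"
  have "p dvd z h" "p dvd z l"
    using pos not_dvd_imp_multiplicity_0 by fastforce+
  then have "\<not> coprime (z h) (z l)"
    using \<open>prime p\<close> by (meson coprime_common_divisor not_prime_unit)
  then have "preceq n h l \<or> preceq n l h"
    using assms(1) hl unfolding is_reduced_tuple_def by blast
  then show "set_decode h \<subseteq> set_decode l \<or> set_decode l \<subseteq> set_decode h"
    using hl by (simp add: preceq_iff_subset set_decode_range)
qed

lemma reduced_tuple_unique:
  assumes z: "is_reduced_tuple n y z" and z': "is_reduced_tuple n y z'"
  shows "z = z'"
proof
  fix h
  show "z h = z' h"
  proof (cases "h \<in> {1..2 ^ n - 1}")
    case False
    then show ?thesis using z z' unfolding is_reduced_tuple_def by simp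
  next
    case True
    show ?thesis
    proof (rule multiplicity_eq_nat)
      show "0 < z h" "0 < z' h" using z z' True unfolding is_reduced_tuple_def by auto
      fix p :: nat assume p: "prime p"
      have "(\<Sum>h | h \<in> {1..2 ^ n - 1} \<and> j \<in> set_decode h. multiplicity p (z h)) =
            (\<Sum>h | h \<in> {1..2 ^ n - 1} \<and> j \<in> set_decode h. multiplicity p (z' h))" for j
      proof (cases "j < n")
        case True
        then show ?thesis using multiplicity_reduced_tuple[OF z p] multiplicity_reduced_tuple[OF z' p] by simp
      next
        case False
        then have none: "{h. h \<in> {1..2 ^ n - 1} \<and> j \<in> set_decode h} = {}"
          using set_decode_range by fastforce
        show ?thesis by (simp only: none sum.empty)
      qed
      then show "multiplicity p (z h) = multiplicity p (z' h)"
        using True inj_set_decode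
        by (intro chain_supported_unique[of _ set_decode, OF _ _ _
              reduced_tuple_chain_supported[OF z p] reduced_tuple_chain_supported[OF z' p]])
           (auto simp: set_decode_range intro: inj_on_subset)
    qed
  qed
qed

definition layer_tuple :: "nat \<Rightarrow> (nat \<Rightarrow> nat) \<Rightarrow> nat \<Rightarrow> nat" where
  "layer_tuple n y h =
     (if h \<in> {1..2 ^ n - 1} then
        \<Prod>p\<in>prime_factors (\<Prod>j<n. y j). p ^ superlevel_count {..<n} (\<lambda>j. multiplicity p (y j)) (set_decode h)
      else 0)"

lemma multiplicity_layer_tuple:
  assumes y: "\<forall>j<n. 0 < y j" and h: "h \<in> {1..2 ^ n - 1}" and q: "prime q"
  shows "multiplicity q (layer_tuple n y h) = superlevel_count {..<n} (\<lambda>j. multiplicity q (y j)) (set_decode h)"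
proof -
  define f where "f p = superlevel_count {..<n} (\<lambda>j. multiplicity p (y j)) (set_decode h)" for p
  have "layer_tuple n y h = (\<Prod>p\<in>prime_factors (\<Prod>j<n. y j). p ^ f p)"
    using h by (simp add: layer_tuple_def f_def)
  then have mult: "multiplicity q (layer_tuple n y h) = (if q \<in> prime_factors (\<Prod>j<n. y j) then f q else 0)"
    using q by (simp add: multiplicity_prod_prime_powers in_prime_factors_imp_prime)
  show ?thesis
  proof (cases "q \<in> prime_factors (\<Prod>j<n. y j)")
    case False
    then have "\<not> q dvd y j" if "j < n" for j
      using y q that by (auto simp: in_prime_factors_iff dvd_prodI intro: dvd_trans)
    then have "{j\<in>{..<n}. t \<le> multiplicity q (y j)} = {}" if "0 < t" for t
      using that not_dvd_imp_multiplicity_0 by fastforce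
    then have "{t. 0 < t \<and> {j\<in>{..<n}. t \<le> multiplicity q (y j)} = set_decode h} = {}"
      using set_decode_range[OF h] by blast
    then have "f q = 0" unfolding f_def superlevel_count_def by (simp only: card.empty)
    with mult show ?thesis by (simp add: f_def)
  qed (use mult f_def in simp)
qed

lemma layer_tuple_pos: "h \<in> {1..2 ^ n - 1} \<Longrightarrow> 0 < layer_tuple n y h"
  by (auto simp: layer_tuple_def in_prime_factors_iff prime_gt_0_nat intro!: prod_pos)

lemma layer_tuple_reduced:
  assumes y: "\<forall>j<n. 0 < y j"
  shows "is_reduced_tuple n y (layer_tuple n y)"
  unfolding is_reduced_tuple_def
proof (intro conjI ballI allI impI)
  fix h l assume h: "h \<in> {1..2 ^ n - 1}" and l: "l \<in> {1..2 ^ n - 1}"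
    and incomparable: "\<not> preceq n h l \<and> \<not> preceq n l h"
  show "coprime (layer_tuple n y h) (layer_tuple n y l)"
  proof (rule ccontr)
    assume "\<not> coprime (layer_tuple n y h) (layer_tuple n y l)"
    then have "gcd (layer_tuple n y h) (layer_tuple n y l) \<noteq> 1" by (simp add: coprime_iff_gcd_eq_1)
    then obtain q where q: "prime q" "q dvd gcd (layer_tuple n y h) (layer_tuple n y l)"
      using prime_factor_nat by blast
    have "0 < superlevel_count {..<n} (\<lambda>j. multiplicity q (y j)) (set_decode k)"
      if k: "k \<in> {1..2 ^ n - 1}" "q dvd layer_tuple n y k" for k
      using k layer_tuple_pos[OF k(1)] q(1)
      by (simp add: prime_multiplicity_gt_zero_iff flip: multiplicity_layer_tuple[OF y k(1) q(1)])
    then have "0 < superlevel_count {..<n} (\<lambda>j. multiplicity q (y j)) (set_decode h)"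
      "0 < superlevel_count {..<n} (\<lambda>j. multiplicity q (y j)) (set_decode l)"
      using h l q(2) by auto
    then have "set_decode h \<subseteq> set_decode l \<or> set_decode l \<subseteq> set_decode h"
      by (rule superlevel_count_chain)
    then show False
      using incomparable set_decode_range[OF h] set_decode_range[OF l] by (simp add: preceq_iff_subset)
  qed
next
  fix j assume j: "j < n"
  show "y j = (\<Prod>h\<in>{1..2 ^ n - 1}. layer_tuple n y h ^ eps j h)"
  proof (rule multiplicity_eq_nat)
    show "0 < y j" using y j by simp
    show "0 < (\<Prod>h\<in>{1..2 ^ n - 1}. layer_tuple n y h ^ eps j h)"
      using layer_tuple_pos by (auto intro!: prod_pos)
    fix q :: nat assume q: "prime q"
    have "multiplicity q (\<Prod>h\<in>{1..2 ^ n - 1}. layer_tuple n y h ^ eps j h) =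
          (\<Sum>h\<in>{1..2 ^ n - 1}. eps j h * multiplicity q (layer_tuple n y h))"
      using layer_tuple_pos q by (intro multiplicity_prod_power) (auto simp: prime_imp_prime_elem)
    also have "\<dots> = (\<Sum>h | h \<in> {1..2 ^ n - 1} \<and> j \<in> set_decode h.
                      superlevel_count {..<n} (\<lambda>j. multiplicity q (y j)) (set_decode h))"
      using multiplicity_layer_tuple[OF y _ q] by (simp add: eps_eq_of_bool Int_def)
    also have "\<dots> = multiplicity q (y j)"
      using j by (simp only: sum_set_decode_containing) (simp add: sum_superlevel_count)
    finally show "multiplicity q (y j) = multiplicity q (\<Prod>h\<in>{1..2 ^ n - 1}. layer_tuple n y h ^ eps j h)"
      by simp
  qed
qed (simp add: layer_tuple_pos, simp add: layer_tuple_def)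

lemma ztuple_reduced: "\<forall>j<n. 0 < y j \<Longrightarrow> is_reduced_tuple n y (ztuple n y)"
  unfolding ztuple_def using layer_tuple_reduced reduced_tuple_unique by (metis theI)

lemma bezout_Gcd:
  fixes a :: "'i \<Rightarrow> nat"
  assumes "finite A"
  shows "\<exists>u. (\<Sum>i\<in>A. u i * int (a i)) = int (Gcd (a ` A))"
  using assms
proof (induction A rule: finite_induct)
  case (insert x A)
  then obtain u where u: "(\<Sum>i\<in>A. u i * int (a i)) = int (Gcd (a ` A))" by blast
  obtain s t where st: "s * int (a x) + t * int (Gcd (a ` A)) = gcd (int (a x)) (int (Gcd (a ` A)))"
    using bezout_int by blast
  define u' where "u' i = (if i = x then s else t * u i)" for i
  have "(\<Sum>i\<in>insert x A. u' i * int (a i)) = s * int (a x) + t * (\<Sum>i\<in>A. u i * int (a i))"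
    using insert.hyps unfolding u'_def by (auto simp: sum_distrib_left mult.assoc intro!: sum.cong)
  also have "\<dots> = int (Gcd (a ` insert x A))" using st u by (simp add: gcd_int_int_eq)
  finally show ?case by blast
qed simp

context
  fixes n :: nat and y :: "nat \<Rightarrow> nat"
  assumes y_pos: "\<forall>j<n. 0 < y j"
begin

lemma ztuple_pos: "h \<in> {1..2 ^ n - 1} \<Longrightarrow> 0 < ztuple n y h"
  using ztuple_reduced[OF y_pos] unfolding is_reduced_tuple_def by blast

lemma dvec_pos: "0 < dvec n y i"
  unfolding dvec_def using ztuple_pos by (auto intro!: prod_pos)

lemma dvec_mult_y: "i < n \<Longrightarrow> dvec n y i * y i = (\<Prod>h\<in>{1..2 ^ n - 1}. ztuple n y h)"
proof -
  assume "i < n"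
  then have "y i = (\<Prod>h\<in>{1..2 ^ n - 1}. ztuple n y h ^ eps i h)"
    using ztuple_reduced[OF y_pos] unfolding is_reduced_tuple_def by blast
  then have "dvec n y i * y i = (\<Prod>h\<in>{1..2 ^ n - 1}. ztuple n y h ^ (1 - eps i h) * ztuple n y h ^ eps i h)"
    unfolding dvec_def by (simp add: prod.distrib)
  also have "\<dots> = (\<Prod>h\<in>{1..2 ^ n - 1}. ztuple n y h)"
    by (intro prod.cong) (auto simp: eps_eq_of_bool)
  finally show ?thesis .
qed

lemma Gcd_dvec:
  assumes "0 < n"
  shows "Gcd (dvec n y ` {..<n}) = 1"
proof (rule ccontr)
  assume "Gcd (dvec n y ` {..<n}) \<noteq> 1"
  then obtain p where p: "prime p" "p dvd Gcd (dvec n y ` {..<n})" using prime_factor_nat by blast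
  then have dvd_all: "p dvd dvec n y i" if "i < n" for i
    using that by (meson Gcd_dvd dvd_trans image_eqI lessThan_iff)
  define e where "e h = multiplicity p (ztuple n y h)" for h
  have dvd_dvec_iff: "p dvd dvec n y i \<longleftrightarrow> (\<exists>h\<in>{1..2 ^ n - 1}. i \<notin> set_decode h \<and> 0 < e h)" for i
    using p(1) ztuple_pos
    by (auto simp: dvec_def e_def prime_dvd_prod_iff prime_dvd_power_iff eps_eq_of_bool
          prime_multiplicity_gt_zero_iff)
  obtain h\<^sub>0 where h\<^sub>0: "h\<^sub>0 \<in> {1..2 ^ n - 1}" "0 < e h\<^sub>0"
    using dvd_all[OF assms] dvd_dvec_iff by blast
  have "chain_supported {1..2 ^ n - 1} set_decode e"
    unfolding e_def using ztuple_reduced[OF y_pos] p(1) by (rule reduced_tuple_chain_supported)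
  then obtain j where j: "\<And>h. h \<in> {1..2 ^ n - 1} \<Longrightarrow> 0 < e h \<Longrightarrow> j \<in> set_decode h"
    using chain_supported_common_element h\<^sub>0 set_decode_range by (metis finite_atLeastAtMost)
  have "j < n" using j[OF h\<^sub>0] set_decode_range[OF h\<^sub>0(1)] by blast
  then show False using dvd_all dvd_dvec_iff j by blast
qed

end

section \<open>Counting solutions\<close>

lemma sum_cofactor_eq:
  fixes x :: "nat \<Rightarrow> int" and d y :: "nat \<Rightarrow> nat"
  assumes "\<forall>i<n. d i * y i = K"
  shows "int K * (\<Sum>i<n. x i * (\<Prod>j\<in>{..<n} - {i}. int (y j))) = (\<Prod>j<n. int (y j)) * (\<Sum>i<n. x i * int (d i))"
  unfolding sum_distrib_left
proof (rule sum.cong)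
  fix i assume "i \<in> {..<n}"
  then have "(\<Prod>j<n. int (y j)) = int (y i) * (\<Prod>j\<in>{..<n} - {i}. int (y j))"
    by (simp add: prod.remove)
  moreover have "int K = int (d i) * int (y i)" using assms \<open>i \<in> {..<n}\<close> by (simp flip: of_nat_mult)
  ultimately show "int K * (x i * (\<Prod>j\<in>{..<n} - {i}. int (y j))) = (\<Prod>j<n. int (y j)) * (x i * int (d i))"
    by (simp add: algebra_simps)
qed simp

lemma dvd_sum_mod_shift:
  fixes d y :: "nat \<Rightarrow> nat" and u :: "nat \<Rightarrow> int"
  assumes k: "k < n" and dy: "\<forall>i<n. d i * y i = K" and u: "(\<Sum>i<n. u i * int (d i)) = 1"
  shows "int (d k) dvd (\<Sum>i\<in>{..<n} - {k}. (c * u i) mod int (y i) * int (d i)) - c"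
proof -
  have "int (d k) dvd (c * u i) mod int (y i) * int (d i) - c * u i * int (d i)" if "i < n" for i
  proof -
    have "(c * u i) mod int (y i) * int (d i) - c * u i * int (d i) = - ((c * u i) div int (y i)) * int K"
      using dy that by (simp add: minus_div_mult_eq_mod[symmetric] algebra_simps flip: of_nat_mult)
    moreover have "int (d k) dvd int K" using dy k by (metis dvd_triv_left of_nat_mult)
    ultimately show ?thesis by simp
  qed
  then have "int (d k) dvd (\<Sum>i\<in>{..<n} - {k}. (c * u i) mod int (y i) * int (d i) - c * u i * int (d i))"
    by (intro dvd_sum) auto
  moreover have "(\<Sum>i\<in>{..<n} - {k}. u i * int (d i)) = 1 - u k * int (d k)"
    using u k by (simp add: sum_diff1)
  then have "(\<Sum>i\<in>{..<n} - {k}. c * u i * int (d i)) = c - c * u k * int (d k)"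
    by (simp add: sum_distrib_left[symmetric] mult.assoc right_diff_distrib)
  then have "(\<Sum>i\<in>{..<n} - {k}. (c * u i) mod int (y i) * int (d i)) - c =
      (\<Sum>i\<in>{..<n} - {k}. (c * u i) mod int (y i) * int (d i) - c * u i * int (d i)) - c * u k * int (d k)"
    by (simp add: sum_subtractf)
  ultimately show ?thesis by (simp add: dvd_diff)
qed

definition hyperplane_points :: "nat \<Rightarrow> (nat \<Rightarrow> nat) \<Rightarrow> nat \<Rightarrow> (nat \<Rightarrow> int) set" where
  "hyperplane_points n d m =
     {x. (\<forall>i\<ge>n. x i = 0) \<and> (\<forall>i<n. \<bar>x i\<bar> \<le> int m) \<and> (\<Sum>i<n. x i * int (d i)) = 0}"

text \<open>The shifted d-weighted sum of a solution x by the vector of residues (c u_i) mod y_i is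
  congruent to c modulo d_k, so it recovers c; then x is recovered on all coordinates but k, and
  x_k from the equation.\<close>

lemma inj_on_shift_hyperplane_points:
  fixes d y :: "nat \<Rightarrow> nat" and u :: "nat \<Rightarrow> int"
  assumes k: "k < n" and dy: "\<forall>i<n. d i * y i = K" and u: "(\<Sum>i<n. u i * int (d i)) = 1"
  shows "inj_on (\<lambda>(x, c). restrict (\<lambda>i. x i + (c * u i) mod int (y i)) ({..<n} - {k}))
           (hyperplane_points n d m \<times> {0..<int (d k)})"
proof (rule inj_onI, clarify)
  define A where "A = {..<n} - {k}"
  define t where "t c i = (c * u i) mod int (y i)" for c i
  define S where "S c = (\<Sum>i\<in>A. t c i * int (d i))" for c
  fix x c x' c'
  assume x: "x \<in> hyperplane_points n d m" and x': "x' \<in> hyperplane_points n d m"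
    and c: "c \<in> {0..<int (d k)}" and c': "c' \<in> {0..<int (d k)}"
    and eq: "restrict (\<lambda>i. x i + (c * u i) mod int (y i)) ({..<n} - {k}) =
             restrict (\<lambda>i. x' i + (c' * u i) mod int (y i)) ({..<n} - {k})"
  have coord: "x i + t c i = x' i + t c' i" if "i \<in> A" for i
    using fun_cong[OF eq, of i] that unfolding A_def t_def by simp
  have split: "(\<Sum>i\<in>A. x i * int (d i)) = - (x k * int (d k))" if "x \<in> hyperplane_points n d m" for x
    using that k unfolding A_def hyperplane_points_def by (simp add: sum.remove)
  have shifted: "(\<Sum>i\<in>A. (x i + t c i) * int (d i)) = S c - x k * int (d k)"
    if "x \<in> hyperplane_points n d m" for x c
    using split[OF that] unfolding S_def by (simp add: distrib_right sum.distrib)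
  have "(\<Sum>i\<in>A. (x i + t c i) * int (d i)) = (\<Sum>i\<in>A. (x' i + t c' i) * int (d i))"
    using coord by simp
  then have "S c - x k * int (d k) = S c' - x' k * int (d k)"
    using shifted[OF x, of c] shifted[OF x', of c'] by simp
  then have diff: "c - c' = (S c' - c') - (S c - c) + (x k - x' k) * int (d k)"
    by (simp add: left_diff_distrib)
  have "int (d k) dvd S c - c" "int (d k) dvd S c' - c'"
    using dvd_sum_mod_shift[OF k dy u] unfolding S_def A_def t_def by blast+
  then have "int (d k) dvd (S c' - c') - (S c - c) + (x k - x' k) * int (d k)"
    by (intro dvd_add[OF dvd_diff]) auto
  then have "int (d k) dvd c - c'" unfolding diff .
  then have "c mod int (d k) = c' mod int (d k)" by (simp add: mod_eq_dvd_iff)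
  then have cc: "c = c'" using c c' by simp
  then have on_A: "x i = x' i" if "i \<in> A" for i using coord that by simp
  then have "(\<Sum>i\<in>A. x i * int (d i)) = (\<Sum>i\<in>A. x' i * int (d i))" by simp
  then have "x k * int (d k) = x' k * int (d k)" using split[OF x] split[OF x'] by simp
  then have on_k: "x k = x' k" using c by simp
  have "x = x'"
  proof
    fix i show "x i = x' i"
      using on_A on_k x x' unfolding A_def hyperplane_points_def
      by (cases "i < n"; cases "i = k") auto
  qed
  then show "x = x' \<and> c = c'" using cc by simp
qed

lemma card_hyperplane_points_le:
  fixes d y :: "nat \<Rightarrow> nat" and u :: "nat \<Rightarrow> int"
  assumes k: "k < n" and dy: "\<forall>i<n. d i * y i = K" and u: "(\<Sum>i<n. u i * int (d i)) = 1"
    and y: "\<forall>i<n. 0 < y i \<and> y i \<le> m"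
  shows "card (hyperplane_points n d m) * d k \<le> (3 * m + 1) ^ (n - 1)"
proof -
  define A where "A = {..<n} - {k}"
  define F where "F = (\<lambda>(x, c). restrict (\<lambda>i. x i + (c * u i) mod int (y i)) A)"
  have "F (x, c) \<in> A \<rightarrow>\<^sub>E {- int m..2 * int m}" if x: "x \<in> hyperplane_points n d m" for x c
  proof (rule PiE_I)
    fix i assume "i \<in> A"
    then have "i < n" unfolding A_def by simp
    then have bounds: "\<bar>x i\<bar> \<le> int m" "0 < int (y i)" "int (y i) \<le> int m"
      using x y unfolding hyperplane_points_def by auto
    have "0 \<le> (c * u i) mod int (y i)" "(c * u i) mod int (y i) < int (y i)"
      using bounds(2) by (simp_all add: pos_mod_sign pos_mod_bound)
    moreover have "F (x, c) i = x i + (c * u i) mod int (y i)" using \<open>i \<in> A\<close> by (simp add: F_def)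
    ultimately show "F (x, c) i \<in> {- int m..2 * int m}"
      using bounds unfolding atLeastAtMost_iff by linarith
  qed (simp add: F_def)
  then have "F ` (hyperplane_points n d m \<times> {0..<int (d k)}) \<subseteq> A \<rightarrow>\<^sub>E {- int m..2 * int m}"
    by auto
  moreover have "inj_on F (hyperplane_points n d m \<times> {0..<int (d k)})"
    unfolding F_def A_def by (rule inj_on_shift_hyperplane_points[OF k dy u])
  ultimately have "card (hyperplane_points n d m \<times> {0..<int (d k)}) \<le> card (A \<rightarrow>\<^sub>E {- int m..2 * int m})"
    by (intro card_inj_on_le) (auto simp: A_def finite_PiE)
  also have "\<dots> = (3 * m + 1) ^ (n - 1)"
  proof -
    have "3 * int m + 1 = int (3 * m + 1)" by simp
    then have "nat (3 * int m + 1) = 3 * m + 1" by (simp only: nat_int)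
    then show ?thesis using k by (simp add: A_def card_PiE)
  qed
  finally show ?thesis by (simp add: card_cartesian_product)
qed


lemma Ncount_eq_card_hyperplane_points:
  assumes y: "\<forall>i<n. 0 < y i" and X: "0 \<le> X"
  shows "Ncount n y X = card (hyperplane_points n (dvec n y) (nat \<lfloor>X\<rfloor>))"
proof -
  define K where "K = (\<Prod>h\<in>{1..2 ^ n - 1}. ztuple n y h)"
  have K: "0 < K" unfolding K_def using ztuple_pos[OF y] by (auto intro!: prod_pos)
  have "(\<Sum>i<n. x i * (\<Prod>j\<in>{..<n} - {i}. int (y j))) = 0 \<longleftrightarrow>
      (\<Sum>i<n. x i * int (dvec n y i)) = 0" for x
  proof -
    have "(\<Sum>i<n. x i * (\<Prod>j\<in>{..<n} - {i}. int (y j))) = 0 \<longleftrightarrow>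
        int K * (\<Sum>i<n. x i * (\<Prod>j\<in>{..<n} - {i}. int (y j))) = 0"
      using K by simp
    also have "\<dots> \<longleftrightarrow> (\<Prod>j<n. int (y j)) * (\<Sum>i<n. x i * int (dvec n y i)) = 0"
      using dvec_mult_y[OF y] unfolding K_def by (subst sum_cofactor_eq) auto
    also have "\<dots> \<longleftrightarrow> (\<Sum>i<n. x i * int (dvec n y i)) = 0"
      using y by auto
    finally show ?thesis .
  qed
  moreover have "real_of_int \<bar>a\<bar> \<le> X \<longleftrightarrow> \<bar>a\<bar> \<le> int (nat \<lfloor>X\<rfloor>)" for a
    using X by (simp add: le_floor_iff)
  ultimately show ?thesis unfolding Ncount_def hyperplane_points_def by simp
qed

lemma Ncount_mult_dvec_le:
  assumes k: "k < n" and X: "1 \<le> X" and y: "\<forall>i<n. 1 \<le> y i \<and> real (y i) \<le> X"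
  shows "real (Ncount n y X) * real (dvec n y k) \<le> (4 * X) ^ (n - 1)"
proof -
  have y_pos: "\<forall>i<n. 0 < y i" using y by auto
  define m where "m = nat \<lfloor>X\<rfloor>"
  have "real m \<le> X" "\<forall>i<n. 0 < y i \<and> y i \<le> m"
    using X y unfolding m_def by (auto simp: le_nat_floor)
  obtain u where u: "(\<Sum>i<n. u i * int (dvec n y i)) = 1"
    using bezout_Gcd[of "{..<n}" "dvec n y"] Gcd_dvec[OF y_pos] k by auto
  have "\<forall>i<n. dvec n y i * y i = (\<Prod>h\<in>{1..2 ^ n - 1}. ztuple n y h)"
    using dvec_mult_y[OF y_pos] by blast
  from card_hyperplane_points_le[OF k this u \<open>\<forall>i<n. 0 < y i \<and> y i \<le> m\<close>]
  have "Ncount n y X * dvec n y k \<le> (3 * m + 1) ^ (n - 1)"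
    using X unfolding m_def by (simp add: Ncount_eq_card_hyperplane_points[OF y_pos])
  then have "real (Ncount n y X * dvec n y k) \<le> real ((3 * m + 1) ^ (n - 1))"
    by (simp only: of_nat_le_iff)
  then have "real (Ncount n y X) * real (dvec n y k) \<le> (3 * real m + 1) ^ (n - 1)"
    by (simp add: add.commute)
  also have "\<dots> \<le> (4 * X) ^ (n - 1)"
    using \<open>real m \<le> X\<close> X by (intro power_mono) auto
  finally show ?thesis .
qed

lemma sqrt_sum_squares_le:
  fixes f :: "nat \<Rightarrow> real"
  assumes "\<forall>i<n. \<bar>f i\<bar> \<le> c" "0 \<le> c"
  shows "sqrt (\<Sum>i<n. (f i)\<^sup>2) \<le> sqrt (real n) * c"
proof -
  have "(\<Sum>i<n. (f i)\<^sup>2) \<le> (\<Sum>i<n. c\<^sup>2)"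
  proof (rule sum_mono)
    fix i assume "i \<in> {..<n}"
    then have "\<bar>f i\<bar>\<^sup>2 \<le> c\<^sup>2" using assms(1) by (intro power_mono) auto
    then show "(f i)\<^sup>2 \<le> c\<^sup>2" by simp
  qed
  then have "sqrt (\<Sum>i<n. (f i)\<^sup>2) \<le> sqrt (real n * c\<^sup>2)" by simp
  also have "\<dots> = sqrt (real n) * c" using assms(2) by (simp add: real_sqrt_mult)
  finally show ?thesis .
qed

theorem mainTheorem5:
  fixes n :: nat
  assumes "n \<ge> 3"
  shows "\<exists>C>0. \<forall>(X::real) (y::nat \<Rightarrow> nat). X \<ge> 1 \<longrightarrow>
           (\<forall>i<n. 1 \<le> y i \<and> real (y i) \<le> X) \<longrightarrow>
           real (Ncount n y X) \<le> C * X ^ (n - 1) / dnorm n y"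
proof (intro exI[of _ "4 ^ (n - 1) * sqrt (real n)"] conjI allI impI)
  show "(0::real) < 4 ^ (n - 1) * sqrt (real n)" using assms by simp
  fix X :: real and y :: "nat \<Rightarrow> nat"
  assume X: "X \<ge> 1" and y: "\<forall>i<n. 1 \<le> y i \<and> real (y i) \<le> X"
  obtain k where k: "k < n" "\<forall>i<n. dvec n y i \<le> dvec n y k"
    using assms Max_in[of "dvec n y ` {..<n}"] Max_ge[of "dvec n y ` {..<n}"] by fastforce
  have "\<forall>i<n. 0 < y i" using y by auto
  then have dk: "0 < real (dvec n y k)" by (simp add: dvec_pos)
  have "dnorm n y \<le> sqrt (real n) * real (dvec n y k)"
    unfolding dnorm_def using k by (intro sqrt_sum_squares_le) auto
  moreover have "real (dvec n y k) \<le> dnorm n y"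
    unfolding dnorm_def using k(1) by (intro real_le_rsqrt member_le_sum) auto
  ultimately have D: "0 < dnorm n y" "dnorm n y \<le> sqrt (real n) * real (dvec n y k)"
    using dk by auto
  have "dnorm n y * real (Ncount n y X) \<le> sqrt (real n) * real (dvec n y k) * real (Ncount n y X)"
    using D(2) by (rule mult_right_mono) simp
  also have "\<dots> \<le> sqrt (real n) * (4 * X) ^ (n - 1)"
    using Ncount_mult_dvec_le[OF k(1) X y] by (simp add: mult.assoc mult.commute[of "real (dvec n y k)"] mult_left_mono)
  finally show "real (Ncount n y X) \<le> 4 ^ (n - 1) * sqrt (real n) * X ^ (n - 1) / dnorm n y"
    using D(1) by (simp add: pos_le_divide_eq power_mult_distrib mult_ac)
qed

end
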